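(* For every level $t \in \mathcal{L}$ there exist finitely many levels $u_1, \ldots, u_n$, each generated by the grammar $u ::= x \mid 0 \mid s(u) \mid \operatorname{imax}(u, u)$ (with $x \in \mathcal{X}$, i.e. containing no $\max$), such that $t =_{\mathcal{L}} \max(u_1, \ldots, u_n)$.
   Context: $\operatorname{imax}\colon \mathbb{N}\times\mathbb{N}\to\mathbb{N}$ is defined by $\operatorname{imax}(i,0)=0$ and $\operatorname{imax}(i,j+1)=\max(i,j+1)$. Levels are the terms of the grammar $t ::= x \mid 0 \mid s(t) \mid \max(t,t) \mid \operatorname{imax}(t,t)$, where $x$ ranges over a countable set of variables $\mathcal{X}$; $\mathcal{L}$ denotes the set of levels. A valuation is a function $\sigma\colon\mathcal{X}\to\mathbb{N}$; the value $[t]_\sigma$ is defined by $[0]_\sigma=0$, $[x]_\sigma=\sigma(x)$, $[s(t)]_\sigma=[t]_\sigma+1$, $[\max(t_1,t_2)]_\sigma=\max([t_1]_\sigma,[t_2]_\sigma)$, $[\operatorname{imax}(t_1,t_2)]_\sigma=\operatorname{imax}([t_1]_\sigma,[t_2]_\sigma)$. $t_1 =_{\mathcal{L}} t_2$ means $[t_1]_\sigma=[t_2]_\sigma$ for every valuation $\sigma$. $\max(u_1,\ldots,u_n)$ denotes the $n$-ary maximum (its value is the maximum of the values). *)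

theory Defs
  imports Main
begin

definition imax :: "nat \<Rightarrow> nat \<Rightarrow> nat" where
  "imax i j = (if j = 0 then 0 else max i j)"

datatype level =
    Var nat
  | Zero
  | S level
  | LMax level level
  | IMax level level

primrec eval :: "(nat \<Rightarrow> nat) \<Rightarrow> level \<Rightarrow> nat" where
  "eval \<sigma> (Var x) = \<sigma> x"
| "eval \<sigma> Zero = 0"
| "eval \<sigma> (S t) = Suc (eval \<sigma> t)"
| "eval \<sigma> (LMax t1 t2) = max (eval \<sigma> t1) (eval \<sigma> t2)"
| "eval \<sigma> (IMax t1 t2) = imax (eval \<sigma> t1) (eval \<sigma> t2)"

primrec max_free :: "level \<Rightarrow> bool" where
  "max_free (Var x) = True"
| "max_free Zero = True"
| "max_free (S t) = max_free t"
| "max_free (LMax t1 t2) = False"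
| "max_free (IMax t1 t2) = (max_free t1 \<and> max_free t2)"

end

theory Submission
  imports Defs
begin

text \<open>Every connective except imax commutes with finite maxima, and imax does too because it
is monotone in both arguments: the maximum of imax(a, b) over a \<in> A, b \<in> B is attained at
a = Max A, b = Max B. Pushing max outwards therefore flattens a level into the list of its
max-free alternatives, with imax distributing over the product of the two lists.\<close>

lemma imax_mono: "i \<le> i' \<Longrightarrow> j \<le> j' \<Longrightarrow> imax i j \<le> imax i' j'"
  by (auto simp: imax_def)

lemma Max_image_product_mono2:
  fixes f :: "'a::linorder \<Rightarrow> 'b::linorder \<Rightarrow> 'c::linorder"
  assumes "finite A" "A \<noteq> {}" "finite B" "B \<noteq> {}"
    and mono: "\<And>a a' b b'. a \<le> a' \<Longrightarrow> b \<le> b' \<Longrightarrow> f a b \<le> f a' b'"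
  shows "Max ((\<lambda>(a, b). f a b) ` (A \<times> B)) = f (Max A) (Max B)"
proof (rule Max_eqI)
  show "finite ((\<lambda>(a, b). f a b) ` (A \<times> B))"
    using assms by simp
  have "(Max A, Max B) \<in> A \<times> B"
    using assms by simp
  then show "f (Max A) (Max B) \<in> (\<lambda>(a, b). f a b) ` (A \<times> B)"
    by (rule rev_image_eqI) simp
qed (use assms in \<open>auto intro!: mono\<close>)

primrec max_alternatives :: "level \<Rightarrow> level list" where
  "max_alternatives (Var x) = [Var x]"
| "max_alternatives Zero = [Zero]"
| "max_alternatives (S t) = map S (max_alternatives t)"
| "max_alternatives (LMax t1 t2) = max_alternatives t1 @ max_alternatives t2"
| "max_alternatives (IMax t1 t2) =
     map (\<lambda>(u, v). IMax u v) (List.product (max_alternatives t1) (max_alternatives t2))"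

lemma max_alternatives_ne_Nil: "max_alternatives t \<noteq> []"
  by (induction t) (auto simp flip: set_empty simp: set_product)

lemma max_free_max_alternatives: "u \<in> set (max_alternatives t) \<Longrightarrow> max_free u"
  by (induction t arbitrary: u) auto

lemma eval_eq_Max_max_alternatives:
  "eval \<sigma> t = Max (eval \<sigma> ` set (max_alternatives t))"
proof (induction t)
  case (S t)
  have "mono Suc"
    by (rule monoI) simp
  then show ?case
    using S max_alternatives_ne_Nil[of t] by (simp add: mono_Max_commute image_image)
next
  case (LMax t1 t2)
  then show ?case
    using max_alternatives_ne_Nil[of t1] max_alternatives_ne_Nil[of t2] by (simp add: image_Un Max_Un)
next
  case (IMax t1 t2)
  let ?A = "eval \<sigma> ` set (max_alternatives t1)" and ?B = "eval \<sigma> ` set (max_alternatives t2)"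
  have "eval \<sigma> ` set (max_alternatives (IMax t1 t2)) = (\<lambda>(a, b). imax a b) ` (?A \<times> ?B)"
    by force
  then show ?case
    using IMax max_alternatives_ne_Nil[of t1] max_alternatives_ne_Nil[of t2]
    by (simp add: Max_image_product_mono2 imax_mono)
qed simp_all

theorem theorem13:
  fixes t :: level
  shows "\<exists>us :: level list. us \<noteq> [] \<and> (\<forall>u \<in> set us. max_free u) \<and>
           (\<forall>\<sigma>. eval \<sigma> t = Max (eval \<sigma> ` set us))"
  using max_alternatives_ne_Nil max_free_max_alternatives eval_eq_Max_max_alternatives by blast

end
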